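(* Let $1\to F\to G\xrightarrow{\tau} Q\to 1$ be a short exact sequence of groups with $F$ finite. Let $T$ be a finite generating set of $Q$ and put $S=\tau^{-1}(T)\cup F$ (a finite generating set of $G$). Then \[\mathrm{ConjGeo}(G,S)=\tau^{-1}\bigl(\mathrm{ConjGeo}(Q,T)\bigr)\cup(F\setminus\{1\}),\] where $\tau$ is extended letterwise to a map $\tau^{-1}(T)^*\to T^*$ and $F\setminus\{1\}$ denotes the set of one-letter words. Consequently, for any class of languages $\mathbf C$ closed under inverse images by non-erasing monoid homomorphisms and under union with finite languages (e.g. regular, one-counter, context-free, recursive languages), $\mathrm{ConjGeo}(G,S)\in\mathbf C$ if and only if $\mathrm{ConjGeo}(Q,T)\in\mathbf C$.
   Context: For a group $G$ with finite generating set $S$, a word $w\in S^*$ is a conjugacy geodesic if its length equals $\min\{\|h\|_S : h \text{ conjugate in } G \text{ to the element } \bar w \text{ represented by } w\}$, where $\|h\|_S$ is the word length with respect to $S$. $\mathrm{ConjGeo}(G,S)\subseteq S^*$ is the language of all conjugacy geodesics. *)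

theory Defs
  imports "HOL-Algebra.Algebra"
begin

definition word_eval :: "('a, 'm) monoid_scheme \<Rightarrow> 'a list \<Rightarrow> 'a" where
  "word_eval G w = foldr (\<lambda>a b. a \<otimes>\<^bsub>G\<^esub> b) w \<one>\<^bsub>G\<^esub>"

definition generating_set :: "('a, 'm) monoid_scheme \<Rightarrow> 'a set \<Rightarrow> bool" where
  "generating_set G S \<longleftrightarrow> S \<subseteq> carrier G \<and> (\<forall>g\<in>carrier G. \<exists>w\<in>lists S. word_eval G w = g)"

definition word_length :: "('a, 'm) monoid_scheme \<Rightarrow> 'a set \<Rightarrow> 'a \<Rightarrow> nat" where
  "word_length G S g = (LEAST n. \<exists>w\<in>lists S. length w = n \<and> word_eval G w = g)"

definition conjugate_in :: "('a, 'm) monoid_scheme \<Rightarrow> 'a \<Rightarrow> 'a \<Rightarrow> bool" where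
  "conjugate_in G h g \<longleftrightarrow> h \<in> carrier G \<and> (\<exists>x\<in>carrier G. h = x \<otimes>\<^bsub>G\<^esub> g \<otimes>\<^bsub>G\<^esub> inv\<^bsub>G\<^esub> x)"

definition conj_length :: "('a, 'm) monoid_scheme \<Rightarrow> 'a set \<Rightarrow> 'a \<Rightarrow> nat" where
  "conj_length G S g = (LEAST n. \<exists>h. conjugate_in G h g \<and> word_length G S h = n)"

definition ConjGeo :: "('a, 'm) monoid_scheme \<Rightarrow> 'a set \<Rightarrow> 'a list set" where
  "ConjGeo G S = {w \<in> lists S. length w = conj_length G S (word_eval G w)}"

definition hom_preimage :: "'a set \<Rightarrow> ('a \<Rightarrow> 'b list) \<Rightarrow> 'b list set \<Rightarrow> 'a list set" where
  "hom_preimage A phi L = {w \<in> lists A. concat (map phi w) \<in> L}"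

definition nonerasing_hom :: "'a set \<Rightarrow> 'b set \<Rightarrow> ('a \<Rightarrow> 'b list) \<Rightarrow> bool" where
  "nonerasing_hom A B phi \<longleftrightarrow> (\<forall>a\<in>A. phi a \<in> lists B \<and> phi a \<noteq> [])"

text \<open>A class of languages, given by its members over alphabets in 'a (CA) and in 'b (CB),
  closed under inverse images by non-erasing homomorphisms between finite alphabets
  (in both directions and within each type) and under union with finite languages.\<close>
definition closed_language_classes :: "'a list set set \<Rightarrow> 'b list set set \<Rightarrow> bool" where
  "closed_language_classes CA CB \<longleftrightarrow>
     (\<forall>A B phi L. finite A \<and> finite B \<and> nonerasing_hom A B phi \<and> L \<in> CB \<longrightarrow> hom_preimage A phi L \<in> CA) \<and>
     (\<forall>A B phi L. finite A \<and> finite B \<and> nonerasing_hom A B phi \<and> L \<in> CA \<longrightarrow> hom_preimage A phi L \<in> CB) \<and>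
     (\<forall>A B phi L. finite A \<and> finite B \<and> nonerasing_hom A B phi \<and> L \<in> CA \<longrightarrow> hom_preimage A phi L \<in> CA) \<and>
     (\<forall>A B phi L. finite A \<and> finite B \<and> nonerasing_hom A B phi \<and> L \<in> CB \<longrightarrow> hom_preimage A phi L \<in> CB) \<and>
     (\<forall>L K. L \<in> CA \<and> finite K \<longrightarrow> L \<union> K \<in> CA) \<and>
     (\<forall>L K. L \<in> CB \<and> finite K \<longrightarrow> L \<union> K \<in> CB)"

end

theory Submission
  imports Defs
begin

text \<open>Let F be the kernel of \<tau>. A T-word for \<tau> g lifts letter by letter to a word in
  \<tau>\<inverse>(T) of the same length representing g (the last letter absorbs the error in F), and
  deleting the F-letters of an S-word and applying \<tau> gives a T-word for \<tau> g that is
  strictly shorter if some letter was deleted. Hence outside F the S-length of g equals the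
  T-length of \<tau> g, and since \<tau> maps conjugacy classes onto conjugacy classes, the same holds
  for the minimal length in the conjugacy class. So a conjugacy geodesic of G representing an
  element outside F has no F-letter and is a letterwise lift of a conjugacy geodesic of Q.
  Inside F every nontrivial element is a single letter of S, so there the conjugacy geodesics
  are the empty word and the one-letter words f \<noteq> 1.

  For the language classes: ConjGeo(G,S) is the preimage of ConjGeo(Q,T) under the letterwise
  map \<tau> plus finitely many words, and ConjGeo(Q,T) is the preimage of ConjGeo(G,S) under a
  letterwise section of \<tau>.\<close>

lemma word_eval_Nil [simp]: "word_eval G [] = \<one>\<^bsub>G\<^esub>"
  by (simp add: word_eval_def)

lemma word_eval_Cons [simp]: "word_eval G (a # w) = a \<otimes>\<^bsub>G\<^esub> word_eval G w"
  by (simp add: word_eval_def)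

lemma (in monoid) word_eval_closed: "w \<in> lists (carrier G) \<Longrightarrow> word_eval G w \<in> carrier G"
  by (induction w) auto

lemma word_length_le: "w \<in> lists S \<Longrightarrow> word_eval G w = g \<Longrightarrow> word_length G S g \<le> length w"
  unfolding word_length_def by (rule Least_le) blast

lemma word_length_witness:
  assumes "generating_set G S" "g \<in> carrier G"
  obtains w where "w \<in> lists S" "length w = word_length G S g" "word_eval G w = g"
proof -
  have "\<exists>n. \<exists>w\<in>lists S. length w = n \<and> word_eval G w = g"
    using assms unfolding generating_set_def by blast
  then have "\<exists>w\<in>lists S. length w = word_length G S g \<and> word_eval G w = g"
    unfolding word_length_def by (rule LeastI_ex)
  then show ?thesis using that by blast
qed

lemma word_length_eq_0_iff:
  assumes "generating_set G S" "g \<in> carrier G"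
  shows "word_length G S g = 0 \<longleftrightarrow> g = \<one>\<^bsub>G\<^esub>"
proof
  assume "word_length G S g = 0"
  then show "g = \<one>\<^bsub>G\<^esub>" using word_length_witness[OF assms] by (metis length_0_conv word_eval_Nil)
qed (use word_length_le[of "[]" S G] in simp)

lemma (in group) conjugate_in_refl: "g \<in> carrier G \<Longrightarrow> conjugate_in G g g"
  unfolding conjugate_in_def by (intro conjI bexI[of _ \<one>]) auto

lemma (in group) conjugate_in_one_iff:
  assumes "conjugate_in G h g" "g \<in> carrier G"
  shows "h = \<one> \<longleftrightarrow> g = \<one>"
proof -
  obtain x where "x \<in> carrier G" "h = x \<otimes> g \<otimes> inv x"
    using assms(1) by (auto simp: conjugate_in_def)
  then show ?thesis using assms(2) by (metis inv_closed l_cancel_one m_closed r_cancel r_inv)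
qed

lemma conj_length_le: "conjugate_in G h g \<Longrightarrow> conj_length G S g \<le> word_length G S h"
  unfolding conj_length_def by (rule Least_le) blast

lemma (in group) conj_length_witness:
  assumes "g \<in> carrier G"
  obtains h where "conjugate_in G h g" "word_length G S h = conj_length G S g"
proof -
  have "\<exists>n h. conjugate_in G h g \<and> word_length G S h = n"
    using conjugate_in_refl[OF assms] by blast
  from LeastI_ex[OF this] show ?thesis using that unfolding conj_length_def by blast
qed

lemma (in group) conj_length_eq_0_iff:
  assumes "generating_set G S" "g \<in> carrier G"
  shows "conj_length G S g = 0 \<longleftrightarrow> g = \<one>"
proof
  assume "conj_length G S g = 0"
  then obtain h where h: "conjugate_in G h g" "word_length G S h = 0"
    using conj_length_witness[OF assms(2)] by metis
  then have "h = \<one>" using word_length_eq_0_iff[OF assms(1)] by (simp add: conjugate_in_def)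
  then show "g = \<one>" using conjugate_in_one_iff[OF h(1) assms(2)] by simp
next
  assume "g = \<one>"
  then show "conj_length G S g = 0"
    using conj_length_le[OF conjugate_in_refl[OF assms(2)], of S] word_length_eq_0_iff[OF assms]
    by simp
qed

lemma (in group_hom) conjugate_in_image:
  "conjugate_in G x g \<Longrightarrow> g \<in> carrier G \<Longrightarrow> conjugate_in H (h x) (h g)"
  unfolding conjugate_in_def by (auto intro!: bexI[of _ "h _"])

lemma (in group_hom) conjugate_in_preimage:
  assumes "h ` carrier G = carrier H" "conjugate_in H y (h g)" "g \<in> carrier G"
  obtains x where "conjugate_in G x g" "h x = y"
proof -
  obtain z where z: "z \<in> carrier H" "y = z \<otimes>\<^bsub>H\<^esub> h g \<otimes>\<^bsub>H\<^esub> inv\<^bsub>H\<^esub> z"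
    using assms(2) by (auto simp: conjugate_in_def)
  obtain a where a: "a \<in> carrier G" "h a = z" using z(1) assms(1) by (metis imageE)
  have "conjugate_in G (a \<otimes> g \<otimes> inv a) g"
    unfolding conjugate_in_def using a assms(3) by blast
  moreover have "h (a \<otimes> g \<otimes> inv a) = y" using a z assms(3) by simp
  ultimately show ?thesis by (rule that)
qed

lemma closed_language_classes_transfer:
  assumes closed: "closed_language_classes CA CB"
    and "finite A" "finite B"
    and hom_AB: "nonerasing_hom A B \<phi>" and hom_BA: "nonerasing_hom B A \<psi>"
    and LA: "LA = hom_preimage A \<phi> LB \<union> K" and "finite K"
    and LB: "LB = hom_preimage B \<psi> LA"
  shows "LA \<in> CA \<longleftrightarrow> LB \<in> CB"
proof
  assume "LA \<in> CA"
  then show "LB \<in> CB"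
    using closed \<open>finite A\<close> \<open>finite B\<close> hom_BA unfolding LB closed_language_classes_def by metis
next
  assume "LB \<in> CB"
  then have "hom_preimage A \<phi> LB \<in> CA"
    using closed \<open>finite A\<close> \<open>finite B\<close> hom_AB unfolding closed_language_classes_def by metis
  then show "LA \<in> CA"
    using closed \<open>finite K\<close> unfolding LA closed_language_classes_def by metis
qed

locale lifted_generating_set = group_hom G Q \<tau>
  for G :: "('g, 'm) monoid_scheme" (structure) and Q :: "('q, 'n) monoid_scheme"
    and \<tau> :: "'g \<Rightarrow> 'q" +
  fixes T :: "'q set"
  assumes surj: "\<tau> ` carrier G = carrier Q"
    and generating: "generating_set Q T"
begin

definition lift_gens :: "'g set" where
  "lift_gens = \<tau> -` T \<inter> carrier G"

definition ext_gens :: "'g set" where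
  "ext_gens = lift_gens \<union> kernel G Q \<tau>"

lemma T_subset: "T \<subseteq> carrier Q"
  using generating by (simp add: generating_set_def)

lemma ext_gens_subset: "ext_gens \<subseteq> carrier G"
  by (auto simp: ext_gens_def lift_gens_def kernel_def)

lemma lift_word:
  "u \<in> lists T \<Longrightarrow> u \<noteq> [] \<Longrightarrow> g \<in> carrier G \<Longrightarrow> word_eval Q u = \<tau> g \<Longrightarrow>
     \<exists>w\<in>lists lift_gens. length w = length u \<and> word_eval G w = g"
proof (induction u arbitrary: g)
  case Nil
  then show ?case by simp
next
  case (Cons t u)
  show ?case
  proof (cases "u = []")
    case True
    then show ?thesis using Cons.prems T_subset by (intro bexI[of _ "[g]"]) (auto simp: lift_gens_def)
  next
    case False
    have "t \<in> \<tau> ` carrier G" using Cons.prems T_subset surj by auto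
    then obtain a where a: "a \<in> carrier G" "\<tau> a = t" by blast
    have t: "t \<in> carrier Q" using a by auto
    have u: "word_eval Q u \<in> carrier Q" using Cons.prems T_subset by (auto intro: H.word_eval_closed)
    have "\<tau> (inv a \<otimes> g) = inv\<^bsub>Q\<^esub> t \<otimes>\<^bsub>Q\<^esub> (t \<otimes>\<^bsub>Q\<^esub> word_eval Q u)"
      using a Cons.prems(3,4) by simp
    also have "\<dots> = word_eval Q u" using t u by (simp add: H.m_assoc[symmetric])
    finally obtain w where w: "w \<in> lists lift_gens" "length w = length u" "word_eval G w = inv a \<otimes> g"
      using Cons.IH[OF _ False] Cons.prems a by (metis G.inv_closed G.m_closed listsE)
    have "a \<otimes> (inv a \<otimes> g) = g" using a Cons.prems by (simp add: G.m_assoc[symmetric])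
    then show ?thesis using w a Cons.prems by (intro bexI[of _ "a # w"]) (auto simp: lift_gens_def)
  qed
qed

definition project :: "'g list \<Rightarrow> 'q list" where
  "project w = map \<tau> (filter (\<lambda>a. a \<in> lift_gens) w)"

lemma project_in_lists: "project w \<in> lists T"
  by (auto simp: project_def lift_gens_def)

lemma word_eval_project: "w \<in> lists ext_gens \<Longrightarrow> word_eval Q (project w) = \<tau> (word_eval G w)"
proof (induction w)
  case (Cons a w)
  then have "a \<in> carrier G" "word_eval G w \<in> carrier G"
    using ext_gens_subset by (auto intro!: G.word_eval_closed)
  then show ?case using Cons by (auto simp: project_def ext_gens_def kernel_def)
qed (simp add: project_def)

lemma length_project_le: "length (project w) \<le> length w"
  by (simp add: project_def)

lemma length_project_less: "w \<notin> lists lift_gens \<Longrightarrow> length (project w) < length w"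
  by (auto simp: project_def intro: length_filter_less)

lemma project_lift_word: "w \<in> lists lift_gens \<Longrightarrow> project w = map \<tau> w"
  unfolding project_def by (subst filter_True) auto

lemma generating_set_ext_gens: "generating_set G ext_gens"
  unfolding generating_set_def
proof (intro conjI ext_gens_subset ballI)
  fix g assume g: "g \<in> carrier G"
  show "\<exists>w\<in>lists ext_gens. word_eval G w = g"
  proof (cases "\<tau> g = \<one>\<^bsub>Q\<^esub>")
    case True
    then show ?thesis using g by (intro bexI[of _ "[g]"]) (auto simp: ext_gens_def kernel_def)
  next
    case False
    obtain u where u: "u \<in> lists T" "word_eval Q u = \<tau> g"
      using generating hom_closed[OF g] unfolding generating_set_def by blast
    moreover have "u \<noteq> []" using u False by auto
    ultimately obtain w where "w \<in> lists lift_gens" "word_eval G w = g"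
      using lift_word g by blast
    then show ?thesis by (auto simp: ext_gens_def)
  qed
qed

lemma word_length_ext_gens:
  assumes g: "g \<in> carrier G" and nontriv: "\<tau> g \<noteq> \<one>\<^bsub>Q\<^esub>"
  shows "word_length G ext_gens g = word_length Q T (\<tau> g)"
proof (rule antisym)
  obtain u where u: "u \<in> lists T" "length u = word_length Q T (\<tau> g)" "word_eval Q u = \<tau> g"
    using word_length_witness[OF generating hom_closed[OF g]] by blast
  moreover have "u \<noteq> []" using u nontriv by auto
  ultimately obtain w where w: "w \<in> lists lift_gens" "length w = length u" "word_eval G w = g"
    using lift_word g by blast
  then have "w \<in> lists ext_gens" by (auto simp: ext_gens_def)
  then show "word_length G ext_gens g \<le> word_length Q T (\<tau> g)"
    using word_length_le w u by metis
next
  obtain w where w: "w \<in> lists ext_gens" "length w = word_length G ext_gens g" "word_eval G w = g"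
    using word_length_witness[OF generating_set_ext_gens g] .
  have "word_length Q T (\<tau> g) \<le> length (project w)"
    using word_length_le[OF project_in_lists word_eval_project[OF w(1)]] w(3) by simp
  also have "\<dots> \<le> length w" by (rule length_project_le)
  finally show "word_length Q T (\<tau> g) \<le> word_length G ext_gens g" using w(2) by simp
qed

lemma conj_length_ext_gens:
  assumes g: "g \<in> carrier G" and nontriv: "\<tau> g \<noteq> \<one>\<^bsub>Q\<^esub>"
  shows "conj_length G ext_gens g = conj_length Q T (\<tau> g)"
proof (rule antisym)
  obtain y where y: "conjugate_in Q y (\<tau> g)" "word_length Q T y = conj_length Q T (\<tau> g)"
    using H.conj_length_witness[OF hom_closed[OF g]] by blast
  obtain x where x: "conjugate_in G x g" "\<tau> x = y"
    using conjugate_in_preimage[OF surj y(1) g] .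
  have "\<tau> x \<noteq> \<one>\<^bsub>Q\<^esub>" using H.conjugate_in_one_iff[OF y(1)] x(2) g nontriv by simp
  then have "word_length G ext_gens x = word_length Q T y"
    using word_length_ext_gens x by (simp add: conjugate_in_def)
  then show "conj_length G ext_gens g \<le> conj_length Q T (\<tau> g)"
    using conj_length_le[OF x(1), of ext_gens] y(2) by simp
next
  obtain x where x: "conjugate_in G x g" "word_length G ext_gens x = conj_length G ext_gens g"
    using G.conj_length_witness[OF g] by blast
  have y: "conjugate_in Q (\<tau> x) (\<tau> g)" using conjugate_in_image[OF x(1) g] .
  have "\<tau> x \<noteq> \<one>\<^bsub>Q\<^esub>" using H.conjugate_in_one_iff[OF y] g nontriv by simp
  then have "word_length G ext_gens x = word_length Q T (\<tau> x)"
    using word_length_ext_gens x by (simp add: conjugate_in_def)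
  then show "conj_length Q T (\<tau> g) \<le> conj_length G ext_gens g"
    using conj_length_le[OF y, of T] x(2) by simp
qed

lemma conj_length_kernel:
  assumes g: "g \<in> kernel G Q \<tau>" and nontriv: "g \<noteq> \<one>"
  shows "conj_length G ext_gens g = 1"
proof -
  have gG: "g \<in> carrier G" using g by (simp add: kernel_def)
  have "word_length G ext_gens g \<le> 1"
    using word_length_le[of "[g]" ext_gens G g] g gG by (simp add: ext_gens_def)
  then have "conj_length G ext_gens g \<le> 1"
    using conj_length_le[OF G.conjugate_in_refl[OF gG]] order_trans by blast
  moreover have "conj_length G ext_gens g \<noteq> 0"
    using G.conj_length_eq_0_iff[OF generating_set_ext_gens gG] nontriv by simp
  ultimately show ?thesis by simp
qed

lemma ConjGeo_ext_gens_outside_kernel: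
  assumes w: "w \<in> lists ext_gens" and nontriv: "\<tau> (word_eval G w) \<noteq> \<one>\<^bsub>Q\<^esub>"
  shows "w \<in> ConjGeo G ext_gens \<longleftrightarrow> w \<in> lists lift_gens \<and> map \<tau> w \<in> ConjGeo Q T"
proof -
  define g where "g = word_eval G w"
  have g: "g \<in> carrier G" using w ext_gens_subset by (auto simp: g_def intro!: G.word_eval_closed)
  have conj_length_g: "conj_length G ext_gens g = conj_length Q T (\<tau> g)"
    using conj_length_ext_gens g nontriv by (simp add: g_def)
  have eval_lifted: "word_eval Q (map \<tau> w) = \<tau> g" if "w \<in> lists lift_gens"
    using word_eval_project[OF w] project_lift_word[OF that] by (simp add: g_def)
  show ?thesis
  proof
    assume "w \<in> ConjGeo G ext_gens"
    then have len: "length w = conj_length Q T (\<tau> g)"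
      using conj_length_g by (simp add: ConjGeo_def g_def)
    have "conj_length Q T (\<tau> g) \<le> word_length Q T (\<tau> g)"
      using conj_length_le[OF H.conjugate_in_refl[OF hom_closed[OF g]]] .
    also have "\<dots> \<le> length (project w)"
      using word_length_le[OF project_in_lists word_eval_project[OF w]] by (simp add: g_def)
    finally have lifted: "w \<in> lists lift_gens"
      using len length_project_less by (metis leD)
    moreover have "map \<tau> w \<in> lists T"
      using lifted by (auto simp: lift_gens_def)
    ultimately show "w \<in> lists lift_gens \<and> map \<tau> w \<in> ConjGeo Q T"
      using len eval_lifted by (simp add: ConjGeo_def)
  next
    assume "w \<in> lists lift_gens \<and> map \<tau> w \<in> ConjGeo Q T"
    then show "w \<in> ConjGeo G ext_gens"
      using w conj_length_g eval_lifted by (simp add: ConjGeo_def g_def)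
  qed
qed

lemma ConjGeo_ext_gens_kernel:
  assumes w: "w \<in> lists ext_gens" and triv: "\<tau> (word_eval G w) = \<one>\<^bsub>Q\<^esub>"
  shows "w \<in> ConjGeo G ext_gens \<longleftrightarrow> w = [] \<or> w \<in> (\<lambda>f. [f]) ` (kernel G Q \<tau> - {\<one>})"
proof -
  define g where "g = word_eval G w"
  have g: "g \<in> carrier G" using w ext_gens_subset by (auto simp: g_def intro!: G.word_eval_closed)
  then have g_kernel: "g \<in> kernel G Q \<tau>" using triv by (simp add: kernel_def g_def)
  have singleton: "w = [a] \<Longrightarrow> a = g" for a
    using w ext_gens_subset by (auto simp: g_def)
  show ?thesis
  proof (cases "g = \<one>")
    case True
    then have "conj_length G ext_gens g = 0"
      using G.conj_length_eq_0_iff[OF generating_set_ext_gens g] by simp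
    then show ?thesis
      using True singleton w by (auto simp: ConjGeo_def g_def)
  next
    case False
    then show ?thesis
      using conj_length_kernel[OF g_kernel] singleton g_kernel w
      by (auto simp: ConjGeo_def g_def length_Suc_conv)
  qed
qed

lemma ConjGeo_lift_gens_kernel:
  assumes "w \<in> lists lift_gens" "\<tau> (word_eval G w) = \<one>\<^bsub>Q\<^esub>"
  shows "map \<tau> w \<in> ConjGeo Q T \<longleftrightarrow> w = []"
proof -
  have "w \<in> lists ext_gens" using assms(1) by (auto simp: ext_gens_def)
  then have "word_eval Q (map \<tau> w) = \<one>\<^bsub>Q\<^esub>"
    using word_eval_project project_lift_word[OF assms(1)] assms(2) by metis
  moreover have "conj_length Q T \<one>\<^bsub>Q\<^esub> = 0"
    using H.conj_length_eq_0_iff[OF generating H.one_closed] by simp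
  moreover have "map \<tau> w \<in> lists T" using assms(1) by (auto simp: lift_gens_def)
  ultimately show ?thesis by (auto simp: ConjGeo_def)
qed

theorem ConjGeo_ext_gens:
  "ConjGeo G ext_gens =
     {w \<in> lists lift_gens. map \<tau> w \<in> ConjGeo Q T} \<union> (\<lambda>f. [f]) ` (kernel G Q \<tau> - {\<one>})"
proof (rule Set.set_eqI)
  fix w
  show "w \<in> ConjGeo G ext_gens \<longleftrightarrow>
      w \<in> {w \<in> lists lift_gens. map \<tau> w \<in> ConjGeo Q T} \<union> (\<lambda>f. [f]) ` (kernel G Q \<tau> - {\<one>})"
  proof (cases "w \<in> lists ext_gens")
    case False
    then show ?thesis by (auto simp: ConjGeo_def ext_gens_def)
  next
    case w: True
    show ?thesis
    proof (cases "\<tau> (word_eval G w) = \<one>\<^bsub>Q\<^esub>")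
      case True
      then show ?thesis
        using ConjGeo_ext_gens_kernel[OF w True] ConjGeo_lift_gens_kernel by auto
    next
      case False
      then show ?thesis
        using ConjGeo_ext_gens_outside_kernel[OF w] by (auto simp: kernel_def)
    qed
  qed
qed

text \<open>Sending 1 to 1 matters: a nontrivial lift f of the letter 1 would make [f] a conjugacy
  geodesic of G, whereas [1] is not one of Q.\<close>
definition lift_letter :: "'q \<Rightarrow> 'g" where
  "lift_letter t = (if t = \<one>\<^bsub>Q\<^esub> then \<one> else (SOME a. a \<in> carrier G \<and> \<tau> a = t))"

lemma lift_letter:
  assumes "t \<in> carrier Q"
  shows "lift_letter t \<in> carrier G" "\<tau> (lift_letter t) = t"
proof -
  have "t \<in> \<tau> ` carrier G" using assms surj by simp
  then have "\<exists>a. a \<in> carrier G \<and> \<tau> a = t" by blast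
  from someI_ex[OF this]
  show "lift_letter t \<in> carrier G" "\<tau> (lift_letter t) = t" by (auto simp: lift_letter_def)
qed

lemma lift_letter_in_lift_gens: "t \<in> T \<Longrightarrow> lift_letter t \<in> lift_gens"
  using lift_letter T_subset by (auto simp: lift_gens_def)

lemma finite_lift_gens:
  assumes "finite (kernel G Q \<tau>)" "finite T"
  shows "finite lift_gens"
proof (rule finite_subset)
  show "lift_gens \<subseteq> (\<lambda>(t, k). lift_letter t \<otimes> k) ` (T \<times> kernel G Q \<tau>)"
  proof
    fix a assume a: "a \<in> lift_gens"
    then have t: "\<tau> a \<in> T" "a \<in> carrier G" by (auto simp: lift_gens_def)
    define b where "b = lift_letter (\<tau> a)"
    have b: "b \<in> carrier G" "\<tau> b = \<tau> a" using lift_letter t by (auto simp: b_def)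
    then have "inv b \<otimes> a \<in> kernel G Q \<tau>" using t by (simp add: kernel_def)
    moreover have "a = b \<otimes> (inv b \<otimes> a)" using t b by (simp add: G.m_assoc[symmetric])
    ultimately show "a \<in> (\<lambda>(t, k). lift_letter t \<otimes> k) ` (T \<times> kernel G Q \<tau>)"
      using t(1) by (intro rev_image_eqI[of "(\<tau> a, inv b \<otimes> a)"]) (simp_all add: b_def)
  qed
qed (use assms in simp)

lemma hom_preimage_lift_letter:
  "hom_preimage T (\<lambda>t. [lift_letter t]) (ConjGeo G ext_gens) = ConjGeo Q T"
proof -
  have lift_iff: "map lift_letter u \<in> ConjGeo G ext_gens \<longleftrightarrow> u \<in> ConjGeo Q T"
    if u: "u \<in> lists T" for u
  proof -
    have lifted: "map lift_letter u \<in> lists lift_gens"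
      using u lift_letter_in_lift_gens by auto
    have "map \<tau> (map lift_letter u) = u"
      using u T_subset lift_letter(2) by (induction u) auto
    moreover have "map lift_letter u \<notin> (\<lambda>f. [f]) ` (kernel G Q \<tau> - {\<one>})"
      using u T_subset lift_letter(2) by (auto simp: kernel_def lift_letter_def)
    ultimately show ?thesis using lifted by (simp add: ConjGeo_ext_gens)
  qed
  have "ConjGeo Q T \<subseteq> lists T" by (auto simp: ConjGeo_def)
  then show ?thesis unfolding hom_preimage_def concat_map_singleton using lift_iff by blast
qed

lemma ConjGeo_in_classes_iff:
  assumes "finite (kernel G Q \<tau>)" "finite T" "closed_language_classes CG CQ"
  shows "ConjGeo G ext_gens \<in> CG \<longleftrightarrow> ConjGeo Q T \<in> CQ"
proof (rule closed_language_classes_transfer[OF assms(3)])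
  show "finite lift_gens" using finite_lift_gens[OF assms(1,2)] .
  show "nonerasing_hom lift_gens T (\<lambda>a. [\<tau> a])" "nonerasing_hom T lift_gens (\<lambda>t. [lift_letter t])"
    using lift_letter_in_lift_gens by (auto simp: nonerasing_hom_def lift_gens_def)
  show "ConjGeo G ext_gens =
      hom_preimage lift_gens (\<lambda>a. [\<tau> a]) (ConjGeo Q T) \<union> (\<lambda>f. [f]) ` (kernel G Q \<tau> - {\<one>})"
    by (simp add: ConjGeo_ext_gens hom_preimage_def)
  show "ConjGeo Q T = hom_preimage T (\<lambda>t. [lift_letter t]) (ConjGeo G ext_gens)"
    using hom_preimage_lift_letter by simp
qed (use assms in simp_all)

end

theorem mainTheorem5:
  fixes G :: "('g, 'm) monoid_scheme" and Q :: "('q, 'n) monoid_scheme"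
    and \<tau> :: "'g \<Rightarrow> 'q" and T :: "'q set"
  assumes "group G" and "group Q"
    and "\<tau> \<in> hom G Q" and "\<tau> ` carrier G = carrier Q"
    and "finite (kernel G Q \<tau>)"
    and "finite T" and "generating_set Q T"
  defines "S \<equiv> (\<tau> -` T \<inter> carrier G) \<union> kernel G Q \<tau>"
  shows "ConjGeo G S =
           {w \<in> lists (\<tau> -` T \<inter> carrier G). map \<tau> w \<in> ConjGeo Q T}
           \<union> (\<lambda>f. [f]) ` (kernel G Q \<tau> - {\<one>\<^bsub>G\<^esub>})
         \<and> (\<forall>CG CQ. closed_language_classes CG CQ \<longrightarrow>
              (ConjGeo G S \<in> CG \<longleftrightarrow> ConjGeo Q T \<in> CQ))"
proof -
  interpret lifted_generating_set G Q \<tau> T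
    using assms(1-4,7)
    by (simp add: lifted_generating_set_def lifted_generating_set_axioms_def group_hom_def
        group_hom_axioms_def)
  have "S = ext_gens" by (simp add: S_def ext_gens_def lift_gens_def)
  then show ?thesis
    using ConjGeo_ext_gens ConjGeo_in_classes_iff[OF assms(5,6)] by (simp add: lift_gens_def)
qed

end
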